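(* Let $\vec{q}=(q_1,q_2,\dots)$ with $q_i\ge0$, $\sum_iq_i=1$. Let $D\subseteq\{1,\dots,n-1\}$, $\lambda\vdash n$, and let $\beta_\lambda(D)$ be the number of standard Young tableaux of shape $\lambda$ with descent set $D$. Suppose $\beta_\lambda(D)\neq0$. Then for any fixed permutation $w\in S_n$ with $\mathrm{Des}(w^{-1})=D$ and RSK shape $\lambda$, the probability that a biased $\vec{q}$-shuffle produces $w$ equals the probability that a biased $\vec{q}$-shuffle produces a permutation $v$ whose RSK tableaux $(P(v),Q(v))$ satisfy $\mathrm{Des}(P(v))=D$ and $\mathrm{shape}(Q(v))=\lambda$, divided by $\beta_\lambda(D)f_\lambda$, where $f_\lambda$ is the number of standard Young tableaux of shape $\lambda$.
   Context: A biased riffle shuffle with parameters $\vec{q}$ on $n$ cards: cut the deck into consecutive piles of sizes $k_1,k_2,\dots$ with probability $\binom{n}{k_1,k_2,\dots}\prod_iq_i^{k_i}$, then drop cards one at a time, each time from a pile chosen with probability proportional to its current size. Concretely, the resulting permutation $w$ has the law of: a word $J$ of length $n$ with independent letters, letter $i$ with probability $q_i$; if $a_i$ is the number of $i$'s, place $1,\dots,a_1$ at the positions of the $1$'s left to right, the next $a_2$ integers at the positions of the $2$'s left to right, etc.; $w(p)$ is the integer at position $p$. The descent set of $w$ is $\{i:1\le i\le n-1,\ w(i)>w(i+1)\}$. The descent set of a standard Young tableau is the set of $i$ such that $i+1$ lies in a lower row than $i$. $P(v),Q(v)$ are the RSK insertion and recording tableaux of $v$ (row-inserting $v(1),\dots,v(n)$).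 *)

theory Defs
  imports "HOL-Analysis.Analysis"
begin

(* Permutations of {1..n} in one-line notation: w(p) = w ! (p-1). *)
definition is_perm :: "nat \<Rightarrow> nat list \<Rightarrow> bool" where
  "is_perm n w \<longleftrightarrow> length w = n \<and> distinct w \<and> set w = {1..n}"

definition perm_inv :: "nat list \<Rightarrow> nat list" where
  "perm_inv w = map (\<lambda>i. Suc (LEAST p. p < length w \<and> w ! p = i)) [1..<Suc (length w)]"

definition perm_des :: "nat list \<Rightarrow> nat set" where
  "perm_des w = {i. 1 \<le> i \<and> i < length w \<and> w ! (i - 1) > w ! i}"

(* Biased shuffle: the permutation determined by a word J (letters are naturals,
   letter i drawn with probability q i). *)
definition word_perm :: "nat list \<Rightarrow> nat list" where
  "word_perm J = map (\<lambda>p. Suc (card {p'. p' < length J \<and>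
       (J ! p' < J ! p \<or> (J ! p' = J ! p \<and> p' < p))})) [0..<length J]"

definition shuffle_prob :: "(nat \<Rightarrow> real) \<Rightarrow> nat \<Rightarrow> nat list set \<Rightarrow> real" where
  "shuffle_prob q n S = infsum (\<lambda>J. \<Prod>p<n. q (J ! p)) {J. length J = n \<and> word_perm J \<in> S}"

(* Tableaux: list of rows, row 0 on top (English convention) *)
type_synonym tableau = "nat list list"

definition shape :: "tableau \<Rightarrow> nat list" where
  "shape T = map length T"

definition is_partition :: "nat \<Rightarrow> nat list \<Rightarrow> bool" where
  "is_partition n lam \<longleftrightarrow> sum_list lam = n \<and> (\<forall>x\<in>set lam. 0 < x) \<and> sorted_wrt (\<ge>) lam"

definition is_SYT :: "nat list \<Rightarrow> tableau \<Rightarrow> bool" where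
  "is_SYT lam T \<longleftrightarrow> shape T = lam \<and> distinct (concat T)
     \<and> set (concat T) = {1..sum_list lam}
     \<and> (\<forall>r\<in>set T. sorted_wrt (<) r)
     \<and> (\<forall>i j. Suc i < length T \<and> j < length (T ! Suc i) \<longrightarrow> T ! i ! j < T ! Suc i ! j)"

definition row_of :: "tableau \<Rightarrow> nat \<Rightarrow> nat" where
  "row_of T k = (LEAST r. r < length T \<and> k \<in> set (T ! r))"

definition tab_des :: "tableau \<Rightarrow> nat set" where
  "tab_des T = {i. 1 \<le> i \<and> i < sum_list (shape T) \<and> row_of T (Suc i) > row_of T i}"

definition beta :: "nat list \<Rightarrow> nat set \<Rightarrow> nat" where
  "beta lam D = card {T. is_SYT lam T \<and> tab_des T = D}"

definition flam :: "nat list \<Rightarrow> nat" where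
  "flam lam = card {T. is_SYT lam T}"

fun row_ins :: "nat \<Rightarrow> nat list \<Rightarrow> nat list \<times> nat option" where
  "row_ins x [] = ([x], None)"
| "row_ins x (y # ys) = (if x < y then (x # ys, Some y)
      else (let (r, b) = row_ins x ys in (y # r, b)))"

fun tab_ins :: "nat \<Rightarrow> tableau \<Rightarrow> tableau \<times> nat" where
  "tab_ins x [] = ([[x]], 0)"
| "tab_ins x (r # rs) = (case row_ins x r of
      (r', None) \<Rightarrow> (r' # rs, 0)
    | (r', Some y) \<Rightarrow> (let (rs', i) = tab_ins y rs in (r' # rs', Suc i)))"

definition add_cell :: "nat \<Rightarrow> nat \<Rightarrow> tableau \<Rightarrow> tableau" where
  "add_cell i k Q = (if i < length Q then Q[i := Q ! i @ [k]] else Q @ [[k]])"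

fun rsk_aux :: "nat list \<Rightarrow> nat \<Rightarrow> tableau \<times> tableau \<Rightarrow> tableau \<times> tableau" where
  "rsk_aux [] k PQ = PQ"
| "rsk_aux (x # xs) k (P, Q) =
     (let (P', i) = tab_ins x P in rsk_aux xs (Suc k) (P', add_cell i k Q))"

definition rsk :: "nat list \<Rightarrow> tableau \<times> tableau" where
  "rsk v = rsk_aux v 1 ([], [])"

end

theory Submission
  imports Defs
begin

(*
  The biased shuffle yields word_perm J, the standardization of a random word J, so the
  probability of a permutation v is the total weight of the words whose standardization is v.
  Reading the letters of such a word in the order of the cards 1, ..., n, they increase weakly,
  and strictly at each card i for which i + 1 lies to the left of i, i.e. at the descents of
  v^-1. Hence, when v and w have the same inverse descent set, J |-> J o v^-1 o w is a
  weight-preserving bijection between the words standardizing to v and to w, and both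
  permutations are equally likely.

  RSK is a bijection between permutations of {1..n} and pairs (P, Q) of standard tableaux of
  equal shape, inverted by reverse bumping out of the box of Q that holds the largest entry,
  and Des(P(v)) = Des(v^-1). So exactly beta_lam(D) f_lam permutations v have Des(P(v)) = D
  and shape lam, and each of them is as likely as w.
*)

section \<open>Row insertion into tableaux\<close>

lemma row_ins_NoneD: "row_ins x r = (r', None) \<Longrightarrow> r' = r @ [x] \<and> (\<forall>z\<in>set r. \<not> x < z)"
  by (induction x r arbitrary: r' rule: row_ins.induct) (auto split: if_splits prod.splits)

lemma row_ins_SomeD: "row_ins x r = (r', Some y) \<Longrightarrow>
   \<exists>a b. r = a @ y # b \<and> r' = a @ x # b \<and> x < y \<and> (\<forall>z\<in>set a. \<not> x < z)"
proof (induction x r arbitrary: r' rule: row_ins.induct)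
  case (1 x)
  then show ?case by simp
next
  case (2 x y0 ys)
  show ?case
  proof (cases "x < y0")
    case True
    then show ?thesis using 2(2) by (intro exI[of _ "[]"] exI[of _ ys]) auto
  next
    case False
    obtain r b where rb: "row_ins x ys = (r, b)" by fastforce
    with False 2(2) have r': "r' = y0 # r" and b: "b = Some y" by auto
    from 2(1)[OF False rb[unfolded b]] obtain a c
      where "ys = a @ y # c \<and> r = a @ x # c \<and> x < y \<and> (\<forall>z\<in>set a. \<not> x < z)" by blast
    then show ?thesis using False r' by (intro exI[of _ "y0 # a"] exI[of _ c]) auto
  qed
qed

lemma row_ins_cases:
  obtains (append) "row_ins x r = (r @ [x], None)" "\<forall>z\<in>set r. \<not> x < z"
  | (bump) a y b where "r = a @ y # b" "row_ins x r = (a @ x # b, Some y)" "x < y"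
      "\<forall>z\<in>set a. \<not> x < z"
proof -
  obtain r' b where e: "row_ins x r = (r', b)" by fastforce
  show thesis
  proof (cases b)
    case None
    then show ?thesis using row_ins_NoneD[of x r r'] e append by auto
  next
    case (Some y)
    then show ?thesis using row_ins_SomeD[of x r r' y] e bump by auto
  qed
qed

lemma row_ins_bump: "\<forall>z\<in>set a. \<not> x < z \<Longrightarrow> x < y \<Longrightarrow> row_ins x (a @ y # b) = (a @ x # b, Some y)"
  by (induction a) auto

lemma row_ins_append: "\<forall>z\<in>set r. \<not> x < z \<Longrightarrow> row_ins x r = (r @ [x], None)"
  by (induction r) auto

lemma fst_tab_ins_Cons: "\<exists>rs' i. tab_ins x (r # rs) = (fst (row_ins x r) # rs', i)"
  by (auto split: prod.splits option.splits)

lemma tab_ins_Cons_cases: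
  obtains (append) "tab_ins x (r # rs) = ((r @ [x]) # rs, 0)" "\<forall>z\<in>set r. \<not> x < z"
  | (bump) a y b where "r = a @ y # b" "x < y" "\<forall>z\<in>set a. \<not> x < z"
      "tab_ins x (r # rs) = ((a @ x # b) # fst (tab_ins y rs), Suc (snd (tab_ins y rs)))"
proof (cases rule: row_ins_cases[of x r])
  case append then show ?thesis using that(1) by simp
next
  case (bump a y b)
  then show ?thesis using that(2)[of a y b] by (auto split: prod.splits)
qed

definition fits_below :: "nat list \<Rightarrow> nat list \<Rightarrow> bool" where
  "fits_below r s \<longleftrightarrow> length s \<le> length r \<and> (\<forall>j<length s. r ! j < s ! j)"

fun is_tableau :: "tableau \<Rightarrow> bool" where
  "is_tableau [] = True"
| "is_tableau (r # rs) \<longleftrightarrow> r \<noteq> [] \<and> sorted_wrt (<) r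
     \<and> (case rs of [] \<Rightarrow> True | s # _ \<Rightarrow> fits_below r s) \<and> is_tableau rs"

definition is_shape :: "nat list \<Rightarrow> bool" where
  "is_shape l \<longleftrightarrow> (\<forall>x\<in>set l. 0 < x) \<and> sorted_wrt (\<ge>) l"

definition add_box :: "nat \<Rightarrow> nat list \<Rightarrow> nat list" where
  "add_box i l = (if i < length l then l[i := Suc (l ! i)] else l @ [1])"

definition is_corner :: "nat \<Rightarrow> tableau \<Rightarrow> bool" where
  "is_corner i T \<longleftrightarrow> i < length T \<and> (Suc i < length T \<longrightarrow> length (T ! Suc i) < length (T ! i))"

fun row_idx :: "tableau \<Rightarrow> nat \<Rightarrow> nat" where
  "row_idx [] z = 0"
| "row_idx (r # rs) z = (if z \<in> set r then 0 else Suc (row_idx rs z))"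

lemma is_shape_shape: "is_tableau T \<Longrightarrow> is_shape (shape T)"
proof (induction T)
  case Nil then show ?case by (simp add: is_shape_def shape_def)
next
  case (Cons r rs)
  have "\<forall>s\<in>set rs. length s \<le> length r"
  proof (cases rs)
    case Nil then show ?thesis by simp
  next
    case (Cons s ss)
    have "length s \<le> length r" using Cons.prems Cons by (simp add: fits_below_def)
    moreover have "\<forall>t\<in>set ss. length t \<le> length s"
      using Cons.IH Cons.prems Cons by (simp add: is_shape_def shape_def)
    ultimately show ?thesis using Cons by auto
  qed
  then show ?case using Cons by (auto simp: is_shape_def shape_def)
qed

lemma add_box_ne_new_row:
  assumes "i < length l1" "i = length l2" "\<forall>x\<in>set l1. 0 < x"
  shows "add_box i l1 \<noteq> add_box i l2"
proof
  assume eq: "add_box i l1 = add_box i l2"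
  have "add_box i l1 ! i = Suc (l1 ! i)" "add_box i l2 ! i = 1"
    using assms(1,2) by (simp_all add: add_box_def)
  then have "l1 ! i = 0" using eq by simp
  then show False using assms(1,3) nth_mem by fastforce
qed

lemma add_box_inj:
  assumes "i \<le> length l1" "i \<le> length l2" "\<forall>x\<in>set l1. 0 < x" "\<forall>x\<in>set l2. 0 < x"
    and eq: "add_box i l1 = add_box i l2"
  shows "l1 = l2"
proof -
  have "i < length l2" if "i < length l1"
  proof (rule ccontr)
    assume "\<not> i < length l2"
    then show False using add_box_ne_new_row[OF that _ assms(3), of l2] assms(2) eq by simp
  qed
  moreover have "i < length l1" if "i < length l2"
  proof (rule ccontr)
    assume "\<not> i < length l1"
    then show False using add_box_ne_new_row[OF that _ assms(4), of l1] assms(1) eq by simp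
  qed
  ultimately have same: "i < length l1 \<longleftrightarrow> i < length l2" by blast
  show ?thesis
  proof (cases "i < length l1")
    case True
    then have "length l1 = length l2" "l1[i := Suc (l1 ! i)] = l2[i := Suc (l2 ! i)]"
      using eq same by (auto simp: add_box_def dest: arg_cong[of _ _ length])
    then show ?thesis
      by (metis True list_update_id list_update_overwrite nth_list_update_eq old.nat.inject)
  next
    case False
    then show ?thesis using eq same by (simp add: add_box_def)
  qed
qed

lemma nth_replace_le:
  fixes x y :: nat
  assumes "r = a @ y # b" "x < y" "k < length r"
  shows "(a @ x # b) ! k \<le> r ! k"
  using assms by (cases "k = length a") (auto simp: nth_append nth_Cons split: nat.splits)

lemma nth_replace_less:
  fixes x y :: nat
  assumes "sorted_wrt (<) r" "r = a @ y # b" "x < y" "k \<le> length a"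
  shows "(a @ x # b) ! k < y"
proof (cases "k = length a")
  case False
  then have "(a @ x # b) ! k = r ! k" "r ! k < r ! length a"
    using assms sorted_wrt_nth_less[OF assms(1), of k "length a"] by (auto simp: nth_append)
  then show ?thesis using assms(2) by simp
qed (use assms in simp)

lemma fits_below_bump_append:
  assumes sr: "sorted_wrt (<) r" and d: "fits_below r s" and r: "r = a @ y # b" "x < y"
    and s: "\<forall>z\<in>set s. \<not> y < z"
  shows "fits_below (a @ x # b) (s @ [y])"
proof -
  have sa: "length s \<le> length a"
  proof (rule ccontr)
    assume "\<not> ?thesis"
    then have "r ! length a < s ! length a" "s ! length a \<in> set s"
      using d unfolding fits_below_def by auto
    then show False using s r(1) by auto
  qed
  show ?thesis unfolding fits_below_def
  proof (intro conjI allI impI)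
    show "length (s @ [y]) \<le> length (a @ x # b)" using sa by simp
    fix k assume k: "k < length (s @ [y])"
    show "(a @ x # b) ! k < (s @ [y]) ! k"
    proof (cases "k = length s")
      case True then show ?thesis using nth_replace_less[OF sr r, of k] sa by simp
    next
      case False
      then have "r ! k < s ! k" "k < length r" using k d r(1) sa unfolding fits_below_def by auto
      then show ?thesis using nth_replace_le[OF r, of k] False k by (simp add: nth_append)
    qed
  qed
qed

lemma fits_below_bump_bump:
  assumes sr: "sorted_wrt (<) r" and d: "fits_below r (c @ z # e)" and r: "r = a @ y # b" "x < y"
    and c: "\<forall>z\<in>set c. \<not> y < z"
  shows "fits_below (a @ x # b) (c @ y # e)"
proof -
  have ca: "length c \<le> length a"
  proof (rule ccontr)
    assume "\<not> ?thesis"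
    then have "length a < length (c @ z # e)" by simp
    then have "r ! length a < (c @ z # e) ! length a" using d unfolding fits_below_def by blast
    moreover have "(c @ z # e) ! length a \<in> set c" using \<open>\<not> _\<close>
      by (simp add: nth_append)
    ultimately show False using c r(1) by auto
  qed
  show ?thesis unfolding fits_below_def
  proof (intro conjI allI impI)
    show "length (c @ y # e) \<le> length (a @ x # b)" using d r(1) by (simp add: fits_below_def)
    fix k assume k: "k < length (c @ y # e)"
    show "(a @ x # b) ! k < (c @ y # e) ! k"
    proof (cases "k = length c")
      case True then show ?thesis using nth_replace_less[OF sr r, of k] ca by simp
    next
      case False
      then have "r ! k < (c @ y # e) ! k" "k < length r"
        using k d unfolding fits_below_def by (auto simp: nth_append nth_Cons split: nat.splits)
      then show ?thesis using nth_replace_le[OF r, of k] by simp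
    qed
  qed
qed

lemma fits_below_bump:
  assumes "sorted_wrt (<) r" "fits_below r s" "r = a @ y # b" "x < y"
  shows "fits_below (a @ x # b) (fst (row_ins y s))"
proof (cases rule: row_ins_cases[of y s])
  case append then show ?thesis using fits_below_bump_append assms by simp
next
  case (bump c z e) then show ?thesis using fits_below_bump_bump assms by simp
qed

lemma mset_tab_ins: "mset (concat (fst (tab_ins x P))) = mset (concat P) + {#x#}"
proof (induction x P rule: tab_ins.induct)
  case (1 x) then show ?case by simp
next
  case (2 x r rs)
  show ?case
  proof (cases rule: tab_ins_Cons_cases[of x r rs])
    case append then show ?thesis by simp
  next
    case (bump a y b)
    then have "row_ins x r = (a @ x # b, Some y)" using row_ins_bump by simp
    then show ?thesis using 2 bump by simp
  qed
qed

lemma shape_tab_ins: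
  "tab_ins x P = (P', i) \<Longrightarrow> shape P' = add_box i (shape P) \<and> i \<le> length P"
proof (induction x P arbitrary: P' i rule: tab_ins.induct)
  case (1 x) then show ?case by (auto simp: shape_def add_box_def)
next
  case (2 x r rs)
  show ?case
  proof (cases rule: tab_ins_Cons_cases[of x r rs])
    case append then show ?thesis using 2(2) by (auto simp: shape_def add_box_def)
  next
    case (bump a y b)
    obtain rs' i' where e: "tab_ins y rs = (rs', i')" by fastforce
    have "row_ins x r = (a @ x # b, Some y)" using bump row_ins_bump by simp
    then have IH: "shape rs' = add_box i' (shape rs) \<and> i' \<le> length rs" using 2(1) e by simp
    have "P' = (a @ x # b) # rs'" "i = Suc i'" using 2(2) bump(4) e by auto
    then show ?thesis using IH bump(1) by (auto simp: shape_def add_box_def)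
  qed
qed

lemma tab_ins_in_first_row: "x \<in> set (hd (fst (tab_ins x P)))"
proof (cases P)
  case Nil then show ?thesis by simp
next
  case (Cons r rs)
  then show ?thesis by (cases rule: tab_ins_Cons_cases[of x r rs]) auto
qed

lemma row_idx_tab_ins_self: "row_idx (fst (tab_ins x P)) x = 0"
  using tab_ins_in_first_row[of x P] by (cases "fst (tab_ins x P)") (auto split: prod.splits)

lemma is_tableau_tab_ins:
  assumes "is_tableau P" "distinct (concat P)" "x \<notin> set (concat P)"
  shows "is_tableau (fst (tab_ins x P))"
  using assms
proof (induction x P rule: tab_ins.induct)
  case (1 x) then show ?case by simp
next
  case (2 x r rs)
  have sr: "sorted_wrt (<) r" using 2(2) by simp
  show ?case
  proof (cases rule: tab_ins_Cons_cases[of x r rs])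
    case append
    have "\<forall>z\<in>set r. z < x" using append(2) 2(4) by (auto simp: not_less le_less)
    then have "sorted_wrt (<) (r @ [x])" using sr by (auto simp: sorted_wrt_append)
    moreover have "fits_below (r @ [x]) s" if "rs = s # ss" for s ss
      using 2(2) that by (auto simp: fits_below_def nth_append)
    ultimately show ?thesis using append 2(2) by (auto split: list.splits)
  next
    case (bump a y b)
    have row: "row_ins x r = (a @ x # b, Some y)" using bump row_ins_bump by simp
    have IH: "is_tableau (fst (tab_ins y rs))"
      using 2(1)[OF row[symmetric] refl] 2(2,3) bump(1) by (auto split: prod.splits)
    have ax: "\<forall>z\<in>set a. z < x" using bump(1,3) 2(4) by (auto simp: not_less le_less)
    have sr': "sorted_wrt (<) (a @ x # b)" using sr bump(1,2) ax by (auto simp: sorted_wrt_append)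
    have "case fst (tab_ins y rs) of [] \<Rightarrow> True | s' # _ \<Rightarrow> fits_below (a @ x # b) s'"
    proof (cases rs)
      case Nil
      have "(a @ x # b) ! 0 < y" using nth_replace_less[OF sr bump(1,2), of 0] by simp
      then show ?thesis using Nil by (simp add: fits_below_def)
    next
      case (Cons s ss)
      obtain ss' j where "tab_ins y (s # ss) = (fst (row_ins y s) # ss', j)"
        using fst_tab_ins_Cons by blast
      moreover have "fits_below r s" using 2(2) Cons by simp
      ultimately show ?thesis using fits_below_bump[OF sr _ bump(1,2)] Cons by simp
    qed
    then show ?thesis using bump(4) IH sr' by simp
  qed
qed

section \<open>Removing corners and reverse bumping\<close>

fun del_box :: "nat \<Rightarrow> tableau \<Rightarrow> tableau" where
  "del_box i [] = []"
| "del_box 0 (r # rs) = (if length r = 1 then rs else butlast r # rs)"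
| "del_box (Suc i) (r # rs) = r # del_box i rs"

lemma add_cell_simps [simp]:
  "add_cell 0 k (r # rs) = (r @ [k]) # rs"
  "add_cell (Suc i) k (r # rs) = r # add_cell i k rs"
  "add_cell i k [] = [[k]]"
  by (auto simp: add_cell_def)

lemma shape_add_cell: "shape (add_cell i k Q) = add_box i (shape Q)"
  by (auto simp: add_cell_def add_box_def shape_def map_update)

lemma mset_add_cell: "i \<le> length Q \<Longrightarrow> mset (concat (add_cell i k Q)) = mset (concat Q) + {#k#}"
proof (induction Q arbitrary: i)
  case (Cons r rs) then show ?case by (cases i) auto
qed simp

lemma row_idx_add_cell: "i \<le> length Q \<Longrightarrow> k \<notin> set (concat Q) \<Longrightarrow> row_idx (add_cell i k Q) k = i"
proof (induction Q arbitrary: i)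
  case (Cons r rs) then show ?case by (cases i) auto
qed simp

lemma del_box_add_cell: "is_tableau Q \<Longrightarrow> i \<le> length Q \<Longrightarrow> del_box i (add_cell i k Q) = Q"
proof (induction Q arbitrary: i)
  case (Cons r rs) then show ?case by (cases i) auto
qed simp

lemma tab_ins_eq_add_cell_0:
  assumes "sorted_wrt (<) (hd (add_cell 0 x P))"
  shows "tab_ins x P = (add_cell 0 x P, 0)"
proof (cases P)
  case (Cons r rs)
  then have "row_ins x r = (r @ [x], None)"
    using assms by (intro row_ins_append) (auto simp: sorted_wrt_append)
  then show ?thesis using Cons by simp
qed simp

lemma fits_below_butlast: "fits_below r s \<Longrightarrow> fits_below r (butlast s)"
  by (auto simp: fits_below_def nth_butlast)

lemma sorted_butlast_last: "sorted_wrt (<) r \<Longrightarrow> z \<in> set (butlast r) \<Longrightarrow> z < (last r :: nat)"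
  by (cases r rule: rev_cases) (auto simp: sorted_wrt_append)

lemma is_tableau_add_cell:
  assumes "is_tableau Q" "\<forall>z\<in>set (concat Q). z < k" "i \<le> length Q" "is_shape (add_box i (shape Q))"
  shows "is_tableau (add_cell i k Q)"
  using assms
proof (induction Q arbitrary: i)
  case Nil then show ?case by simp
next
  case (Cons r rs)
  show ?case
  proof (cases i)
    case 0
    have "sorted_wrt (<) (r @ [k])" using Cons.prems by (auto simp: sorted_wrt_append)
    moreover have "fits_below (r @ [k]) s" if "rs = s # ss" for s ss
      using Cons.prems(1) that by (auto simp: fits_below_def nth_append)
    ultimately show ?thesis using 0 Cons.prems(1) by (auto split: list.splits)
  next
    case (Suc i')
    have "add_box (Suc i') (shape (r # rs)) = length r # add_box i' (shape rs)"
      by (auto simp: add_box_def shape_def)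
    then have shape_rs: "is_shape (length r # shape (add_cell i' k rs))"
      using Cons.prems(4) Suc by (simp add: shape_add_cell)
    then have "is_shape (add_box i' (shape rs))" by (simp add: is_shape_def shape_add_cell)
    then have IH: "is_tableau (add_cell i' k rs)" using Cons.IH Cons.prems Suc by auto
    have "fits_below r t" if t: "add_cell i' k rs = t # ts" for t ts
    proof (cases rs)
      case Nil
      then have "t = [k]" using t by simp
      then show ?thesis using Cons.prems(1,2) by (cases r) (auto simp: fits_below_def)
    next
      case (Cons s ss)
      have dsr: "fits_below r s" using Cons Cons.prems(1) by simp
      have "length t \<le> length r" using shape_rs t by (simp add: is_shape_def shape_def)
      moreover have "t = s @ [k] \<or> t = s" using t Cons by (cases i') auto
      ultimately show ?thesis using dsr Cons.prems(2) by (auto simp: fits_below_def nth_append)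
    qed
    then show ?thesis using Suc Cons.prems(1) IH by (auto split: list.splits)
  qed
qed

lemma max_entry_corner:
  assumes "is_tableau Q" "M \<in> set (concat Q)" "\<forall>z\<in>set (concat Q). z \<le> M"
  shows "is_corner (row_idx Q M) Q \<and> last (Q ! row_idx Q M) = M"
  using assms
proof (induction Q)
  case Nil then show ?case by simp
next
  case (Cons r rs)
  show ?case
  proof (cases "M \<in> set r")
    case True
    have sr: "sorted_wrt (<) r" "r \<noteq> []" using Cons.prems by auto
    have lM: "last r = M"
    proof (rule ccontr)
      assume "last r \<noteq> M"
      then have "M \<in> set (butlast r)" using True by (cases r rule: rev_cases) auto
      then have "M < last r" using sorted_butlast_last[OF sr(1)] by simp
      moreover have "last r \<le> M" using Cons.prems(3) sr(2) by simp
      ultimately show False by simp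
    qed
    have "length s < length r" if "rs = s # ss" for s ss
    proof (rule ccontr)
      assume "\<not> ?thesis"
      then have "length r - 1 < length s" using sr(2) by (cases r) auto
      moreover have "fits_below r s" using Cons.prems(1) that by simp
      ultimately have "r ! (length r - 1) < s ! (length r - 1)" by (simp add: fits_below_def)
      moreover have "r ! (length r - 1) = M" using lM sr(2) by (simp add: last_conv_nth)
      moreover have "s ! (length r - 1) \<in> set (concat (r # rs))"
        using \<open>length r - 1 < length s\<close> that by simp
      ultimately show False using Cons.prems(3) by fastforce
    qed
    then show ?thesis using True lM by (cases rs) (auto simp: is_corner_def)
  next
    case False
    then show ?thesis using Cons by (auto simp: is_corner_def)
  qed
qed

lemma del_box_first_corner:
  assumes "is_tableau (r # rs)" "is_corner 0 (r # rs)"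
  shows "is_tableau (del_box 0 (r # rs)) \<and> add_cell 0 (last r) (del_box 0 (r # rs)) = r # rs"
proof (cases "length r = 1")
  case True
  then have "rs = []" using assms by (cases rs) (auto simp: is_corner_def)
  moreover have "r = [last r]" using True by (cases r) auto
  ultimately show ?thesis using True by simp
next
  case False
  have r: "r \<noteq> []" "r = butlast r @ [last r]" "sorted_wrt (<) r" using assms(1) by auto
  then have "butlast r \<noteq> []" "sorted_wrt (<) (butlast r)"
    using False by (cases r rule: rev_cases, auto simp: sorted_wrt_append)+
  moreover have "fits_below (butlast r) s" if "rs = s # ss" for s ss
    using assms that by (auto simp: fits_below_def is_corner_def nth_butlast)
  ultimately show ?thesis using assms(1) False r(2) by (auto split: list.splits)
qed

lemma is_tableau_del_box:
  "is_tableau T \<Longrightarrow> is_corner i T \<Longrightarrow> is_tableau (del_box i T)"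
proof (induction T arbitrary: i)
  case Nil then show ?case by simp
next
  case (Cons r rs)
  show ?case
  proof (cases i)
    case 0 then show ?thesis using del_box_first_corner Cons.prems by blast
  next
    case (Suc i')
    have c: "is_corner i' rs" using Cons.prems(2) Suc by (auto simp: is_corner_def)
    then obtain s ss where rs: "rs = s # ss" by (cases rs) (auto simp: is_corner_def)
    have "fits_below r t" if "del_box i' rs = t # ts" for t ts
    proof (cases i')
      case 0
      have "length s = 1 \<Longrightarrow> ss = []" using c 0 rs Cons.prems(1)
        by (cases ss) (auto simp: is_corner_def)
      then show ?thesis using that rs 0 Cons.prems(1) fits_below_butlast by (auto split: if_splits)
    next
      case Suc
      then show ?thesis using that rs Cons.prems(1) by simp
    qed
    then show ?thesis using Cons.IH[OF _ c] Suc Cons.prems(1) by (auto split: list.splits)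
  qed
qed

lemma add_cell_del_box:
  "is_tableau T \<Longrightarrow> is_corner i T \<Longrightarrow> add_cell i (last (T ! i)) (del_box i T) = T"
proof (induction T arbitrary: i)
  case Nil then show ?case by (simp add: is_corner_def)
next
  case (Cons r rs)
  then show ?case
    using del_box_first_corner[of r rs] by (cases i) (auto simp: is_corner_def)
qed

lemma length_del_box: "i < length T \<Longrightarrow> i \<le> length (del_box i T)"
  by (induction i T rule: del_box.induct) auto

text \<open>Reverse bumping: \<open>y\<close> replaces the largest entry of \<open>r\<close> below \<open>y\<close>,
  which is pushed out.\<close>
definition unbump_row :: "nat \<Rightarrow> nat list \<Rightarrow> nat list \<times> nat" where
  "unbump_row y r = (let a = takeWhile (\<lambda>z. z < y) r; b = dropWhile (\<lambda>z. z < y) r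
     in (butlast a @ y # b, last a))"

fun tab_del :: "nat \<Rightarrow> tableau \<Rightarrow> tableau \<times> nat" where
  "tab_del i [] = ([], 0)"
| "tab_del 0 (r # rs) = (del_box 0 (r # rs), last r)"
| "tab_del (Suc i) (r # rs) =
     (let (rs', y) = tab_del i rs; (r', x) = unbump_row y r in (r' # rs', x))"

lemma unbump_row_eq:
  assumes "sorted_wrt (<) (a @ x # b)" "x < y" "\<forall>z\<in>set b. y < z"
  shows "unbump_row y (a @ x # b) = (a @ y # b, x)"
proof -
  have "\<forall>z\<in>set a. z < y" using assms(1,2) by (auto simp: sorted_wrt_append)
  then have "takeWhile (\<lambda>z. z < y) (a @ x # b) = a @ [x]"
    and "dropWhile (\<lambda>z. z < y) (a @ x # b) = b"
    using assms(2,3) by (cases b; simp add: takeWhile_append2 dropWhile_append2)+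
  then show ?thesis unfolding unbump_row_def Let_def by simp
qed

lemma sorted_split_last_less:
  fixes r :: "nat list"
  assumes "sorted_wrt (<) r" "z \<in> set r" "z < y" "y \<notin> set r"
  shows "\<exists>a x b. r = a @ x # b \<and> x < y \<and> (\<forall>z\<in>set b. y < z)"
  using assms
proof (induction r rule: rev_induct)
  case Nil then show ?case by simp
next
  case (snoc u r)
  show ?case
  proof (cases "u < y")
    case True
    then show ?thesis by (intro exI[of _ r] exI[of _ u] exI[of _ "[]"]) auto
  next
    case False
    then have "z \<in> set r" "y < u" using snoc.prems by (auto simp: le_less)
    with snoc obtain a x b where "r = a @ x # b \<and> x < y \<and> (\<forall>z\<in>set b. y < z)"
      by (auto simp: sorted_wrt_append)
    with \<open>y < u\<close> show ?thesis
      by (intro exI[of _ a] exI[of _ x] exI[of _ "b @ [u]"]) auto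
  qed
qed

lemma fits_below_split_above:
  fixes r :: "nat list"
  assumes "sorted_wrt (<) r" "fits_below r s" "y \<in> set s" "y \<notin> set r"
  obtains a x b where "r = a @ x # b" "x < y" "\<forall>z\<in>set b. y < z"
proof -
  obtain j where "j < length s" "s ! j = y" using assms(3) by (auto simp: in_set_conv_nth)
  then have "r ! j < y" "j < length r" using assms(2) unfolding fits_below_def by auto
  then show thesis using sorted_split_last_less[OF assms(1) _ _ assms(4)] nth_mem that by blast
qed

lemma tab_del_tab_ins:
  assumes "is_tableau P" "distinct (concat P)" "x \<notin> set (concat P)" "tab_ins x P = (P', i)"
  shows "tab_del i P' = (P, x)"
  using assms
proof (induction x P arbitrary: P' i rule: tab_ins.induct)
  case (1 x) then show ?case by auto
next
  case (2 x r rs)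
  have sr: "sorted_wrt (<) r" using 2(2) by simp
  show ?case
  proof (cases rule: tab_ins_Cons_cases[of x r rs])
    case append
    then show ?thesis using 2(2,5) by auto
  next
    case (bump a y b)
    obtain rs' i' where e: "tab_ins y rs = (rs', i')" by fastforce
    have "row_ins x r = (a @ x # b, Some y)" using bump row_ins_bump by simp
    then have IH: "tab_del i' rs' = (rs, y)" using 2(1) 2(2,3) bump(1) e by auto
    have ax: "\<forall>z\<in>set a. z < x" using bump(1,3) 2(4) by (auto simp: not_less le_less)
    have "sorted_wrt (<) (a @ x # b)" using sr bump(1,2) ax by (auto simp: sorted_wrt_append)
    moreover have "\<forall>z\<in>set b. y < z" using sr bump(1) by (auto simp: sorted_wrt_append)
    ultimately have "unbump_row y (a @ x # b) = (r, x)" using unbump_row_eq bump(1,2) by simp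
    then show ?thesis using IH bump(4) e 2(5) by auto
  qed
qed

lemma le_length_prefix_if_nth_less:
  fixes r :: "nat list"
  assumes "r = a @ x # b" "\<forall>z\<in>set b. y < z" "k < length r" "r ! k < y"
  shows "k \<le> length a"
proof (rule ccontr)
  assume "\<not> ?thesis"
  then have "r ! k \<in> set b" using assms(1,3)
    by (auto simp: nth_append nth_Cons split: nat.splits)
  then show False using assms(2,4) by auto
qed

lemma fits_below_unbump_append:
  assumes d: "fits_below r (s @ [y])" and r: "r = a @ x # b" "\<forall>z\<in>set b. y < z"
  shows "fits_below (a @ y # b) s"
proof -
  have all: "\<forall>j<length (s @ [y]). r ! j < (s @ [y]) ! j" and "length (s @ [y]) \<le> length r"
    using d unfolding fits_below_def by blast+
  then have "length s < length r" "r ! length s < y" using all[rule_format, of "length s"] by auto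
  then have sa: "length s \<le> length a" using le_length_prefix_if_nth_less[OF r] by blast
  show ?thesis unfolding fits_below_def
  proof (intro conjI allI impI)
    show "length s \<le> length (a @ y # b)" using sa by simp
    fix k assume "k < length s"
    then have "(a @ y # b) ! k = r ! k" "r ! k < (s @ [y]) ! k" "(s @ [y]) ! k = s ! k"
      using sa r all[rule_format, of k] by (auto simp: nth_append)
    then show "(a @ y # b) ! k < s ! k" by simp
  qed
qed

lemma fits_below_unbump_bump:
  assumes d: "fits_below r (c @ y # e)" and s: "sorted_wrt (<) (c @ y # e)"
    and r: "r = a @ x # b" "\<forall>z\<in>set b. y < z" and "y < z"
  shows "fits_below (a @ y # b) (c @ z # e)"
proof -
  have all: "\<forall>j<length (c @ y # e). r ! j < (c @ y # e) ! j" and "length (c @ y # e) \<le> length r"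
    using d unfolding fits_below_def by blast+
  then have "length c < length r" "r ! length c < (c @ y # e) ! length c"
    using all[rule_format, of "length c"] by auto
  then have ca: "length c \<le> length a" using le_length_prefix_if_nth_less r by simp
  show ?thesis unfolding fits_below_def
  proof (intro conjI allI impI)
    show "length (c @ z # e) \<le> length (a @ y # b)" using d r by (simp add: fits_below_def)
    fix k assume k: "k < length (c @ z # e)"
    show "(a @ y # b) ! k < (c @ z # e) ! k"
    proof (cases "k = length a")
      case True
      moreover have "length c < k \<Longrightarrow> y < (c @ y # e) ! k"
        using sorted_wrt_nth_less[OF s, of "length c" k] k by simp
      ultimately show ?thesis using ca k \<open>y < z\<close>
        by (cases "k = length c") (auto simp: nth_append)
    next
      case False
      then have "(a @ y # b) ! k = r ! k" using r
        by (auto simp: nth_append nth_Cons split: nat.splits)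
      also have "\<dots> < (c @ y # e) ! k" using d k by (simp add: fits_below_def)
      also have "\<dots> \<le> (c @ z # e) ! k" using \<open>y < z\<close>
        by (cases "k = length c") (auto simp: nth_append)
      finally show ?thesis .
    qed
  qed
qed

lemma fits_below_unbump:
  assumes "fits_below r s" "sorted_wrt (<) s" "s = fst (row_ins y s0)"
    and "r = a @ x # b" "\<forall>z\<in>set b. y < z"
  shows "fits_below (a @ y # b) s0"
proof (cases rule: row_ins_cases[of y s0])
  case append then show ?thesis using assms fits_below_unbump_append by simp
next
  case (bump c z e) then show ?thesis using assms fits_below_unbump_bump by simp
qed

lemma tab_ins_tab_del:
  assumes "is_tableau P'" "distinct (concat P')" "is_corner i P'" "tab_del i P' = (P, x)"
  shows "is_tableau P \<and> tab_ins x P = (P', i) \<and> x \<in> set (hd P')"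
  using assms
proof (induction P' arbitrary: i P x)
  case Nil then show ?case by (simp add: is_corner_def)
next
  case (Cons r rs)
  have sr: "sorted_wrt (<) r" "r \<noteq> []" using Cons.prems(1) by auto
  show ?case
  proof (cases i)
    case 0
    then have P: "P = del_box 0 (r # rs)" and x: "x = last r" using Cons.prems(4) by auto
    then have "is_tableau P" and addP: "add_cell 0 x P = r # rs"
      using del_box_first_corner Cons.prems(1,3) 0 by auto
    then show ?thesis using tab_ins_eq_add_cell_0[of x P] x sr 0 by simp
  next
    case (Suc i')
    obtain s ss where rs: "rs = s # ss" using Cons.prems(3) Suc
      by (cases rs) (auto simp: is_corner_def)
    obtain rs0 y where e: "tab_del i' rs = (rs0, y)" by fastforce
    have "is_corner i' rs" using Cons.prems(3) Suc by (auto simp: is_corner_def)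
    then have IH: "is_tableau rs0 \<and> tab_ins y rs0 = (rs, i') \<and> y \<in> set (hd rs)"
      using Cons.IH e Cons.prems(1,2) by simp
    have d: "fits_below r s" using Cons.prems(1) rs by simp
    have "y \<in> set s" "y \<notin> set r" using Cons.prems(2) rs IH by auto
    then obtain a x' b where r: "r = a @ x' # b" "x' < y" "\<forall>z\<in>set b. y < z"
      using fits_below_split_above[OF sr(1) d] by blast
    have "unbump_row y r = (a @ y # b, x')" using unbump_row_eq sr r by simp
    then have P: "P = (a @ y # b) # rs0" and x: "x = x'" using Cons.prems(4) Suc e by auto
    have ax: "\<forall>z\<in>set a. z < x'" using sr r(1) by (auto simp: sorted_wrt_append)
    have "sorted_wrt (<) (a @ y # b)" using ax r sr by (auto simp: sorted_wrt_append)
    moreover have "fits_below (a @ y # b) s0" if "rs0 = s0 # ss0" for s0 ss0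
    proof (rule fits_below_unbump[OF d _ _ r(1,3)])
      show "sorted_wrt (<) s" using Cons.prems(1) rs by simp
      obtain ss' j where "tab_ins y (s0 # ss0) = (fst (row_ins y s0) # ss', j)"
        using fst_tab_ins_Cons by blast
      then show "s = fst (row_ins y s0)" using IH that rs by simp
    qed
    moreover have "row_ins x' (a @ y # b) = (r, Some y)"
      using row_ins_bump[of a x' y b] ax r by fastforce
    ultimately show ?thesis using P x IH Suc r by (auto split: list.splits)
  qed
qed

section \<open>Inverting RSK\<close>

definition is_rsk_pair :: "nat set \<Rightarrow> nat \<Rightarrow> tableau \<times> tableau \<Rightarrow> bool" where
  "is_rsk_pair A m PQ \<longleftrightarrow>
     is_tableau (fst PQ) \<and> distinct (concat (fst PQ)) \<and> set (concat (fst PQ)) = A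
     \<and> is_tableau (snd PQ) \<and> distinct (concat (snd PQ)) \<and> set (concat (snd PQ)) = {1..m}
     \<and> shape (fst PQ) = shape (snd PQ)"

text \<open>The entry \<open>m\<close> of \<open>Q\<close> marks the box created by the last insertion; removing it
  from \<open>Q\<close> and reverse bumping from its row in \<open>P\<close> undoes that insertion.\<close>
fun rsk_inv :: "nat \<Rightarrow> tableau \<times> tableau \<Rightarrow> nat list" where
  "rsk_inv 0 PQ = []"
| "rsk_inv (Suc m) (P, Q) =
     (let i = row_idx Q (Suc m); (P0, x) = tab_del i P in rsk_inv m (P0, del_box i Q) @ [x])"

lemma rsk_aux_snoc: "rsk_aux (xs @ [x]) k PQ =
  (let (P, Q) = rsk_aux xs k PQ; (P', i) = tab_ins x P in (P', add_cell i (k + length xs) Q))"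
proof (induction xs arbitrary: k PQ)
  case Nil then show ?case by (cases PQ) (auto split: prod.splits)
next
  case (Cons a xs)
  obtain P Q where PQ: "PQ = (P, Q)" by fastforce
  obtain P1 i1 where e: "tab_ins a P = (P1, i1)" by fastforce
  show ?case using Cons[of "Suc k" "(P1, add_cell i1 k Q)"] PQ e by simp
qed

lemma rsk_snoc: "rsk (xs @ [x]) =
  (let (P, Q) = rsk xs; (P', i) = tab_ins x P in (P', add_cell i (Suc (length xs)) Q))"
  unfolding rsk_def by (simp add: rsk_aux_snoc)

lemma length_rsk_inv: "length (rsk_inv m PQ) = m"
  by (induction m PQ rule: rsk_inv.induct) (auto simp: Let_def split: prod.splits)

lemma mset_eq_add_distinct_iff:
  "mset xs = mset ys + {#x#} \<Longrightarrow> distinct xs \<longleftrightarrow> distinct ys \<and> x \<notin> set ys"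
  using mset_eq_imp_distinct_iff[of xs "x # ys"] by auto

lemma mset_eq_add_set: "mset xs = mset ys + {#x#} \<Longrightarrow> set xs = insert x (set ys)"
  using mset_eq_setD[of xs "x # ys"] by simp

lemma is_rsk_pair_length: "is_rsk_pair A m (P, Q) \<Longrightarrow> length P = length Q"
  unfolding is_rsk_pair_def shape_def by (auto dest: map_eq_imp_length_eq)

lemma is_rsk_pair_tab_ins:
  assumes pair: "is_rsk_pair A m (P, Q)" and x: "x \<notin> A" and ins: "tab_ins x P = (P', i)"
  shows "is_rsk_pair (insert x A) (Suc m) (P', add_cell i (Suc m) Q)"
proof -
  have tP: "is_tableau P" and dP: "distinct (concat P)" and sP: "set (concat P) = A"
    and tQ: "is_tableau Q" and dQ: "distinct (concat Q)" and sQ: "set (concat Q) = {1..m}"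
    and shape: "shape P = shape Q"
    using pair unfolding is_rsk_pair_def by auto
  have mP': "mset (concat P') = mset (concat P) + {#x#}" using mset_tab_ins[of x P] ins by simp
  have sh: "shape P' = add_box i (shape P)" "i \<le> length P" using shape_tab_ins[OF ins] by auto
  have i: "i \<le> length Q" using sh is_rsk_pair_length[OF pair] by simp
  have shQ: "shape (add_cell i (Suc m) Q) = shape P'" using sh shape by (simp add: shape_add_cell)
  have "x \<notin> set (concat P)" using x sP by simp
  then have tP': "is_tableau P'" using is_tableau_tab_ins[OF tP dP] ins by (metis fst_conv)
  have "\<forall>z\<in>set (concat Q). z < Suc m" using sQ by auto
  then have tQ': "is_tableau (add_cell i (Suc m) Q)"
    using is_tableau_add_cell[OF tQ _ i] is_shape_shape[OF tP'] shQ by (simp add: shape_add_cell)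
  have Sm: "Suc m \<notin> set (concat Q)" using sQ by simp
  have mQ': "mset (concat (add_cell i (Suc m) Q)) = mset (concat Q) + {#Suc m#}"
    using mset_add_cell i by simp
  have "distinct (concat P')" "set (concat P') = insert x A"
    using mset_eq_add_distinct_iff[OF mP'] mset_eq_add_set[OF mP'] dP sP x by auto
  moreover have "distinct (concat (add_cell i (Suc m) Q))"
    using mset_eq_add_distinct_iff[OF mQ'] dQ Sm by simp
  moreover have "set (concat (add_cell i (Suc m) Q)) = {1..Suc m}"
    using mset_eq_add_set[OF mQ'] sQ by (simp add: atLeastAtMostSuc_conv)
  ultimately show ?thesis using tP' tQ' shQ unfolding is_rsk_pair_def by simp
qed

lemma rsk_inv_tab_ins:
  assumes pair: "is_rsk_pair A m (P, Q)" and x: "x \<notin> A" and ins: "tab_ins x P = (P', i)"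
  shows "rsk_inv (Suc m) (P', add_cell i (Suc m) Q) = rsk_inv m (P, Q) @ [x]"
proof -
  have i: "i \<le> length Q" using shape_tab_ins[OF ins] is_rsk_pair_length[OF pair] by simp
  have "Suc m \<notin> set (concat Q)" using pair unfolding is_rsk_pair_def by auto
  then have "row_idx (add_cell i (Suc m) Q) (Suc m) = i" using row_idx_add_cell i by blast
  moreover have "tab_del i P' = (P, x)"
    using tab_del_tab_ins ins pair x unfolding is_rsk_pair_def by auto
  moreover have "del_box i (add_cell i (Suc m) Q) = Q"
    using del_box_add_cell i pair unfolding is_rsk_pair_def by simp
  ultimately show ?thesis by simp
qed

lemma rsk_snoc_cases:
  obtains P Q P' i where "rsk u = (P, Q)" "tab_ins x P = (P', i)"
    "rsk (u @ [x]) = (P', add_cell i (Suc (length u)) Q)"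
proof -
  obtain P Q where PQ: "rsk u = (P, Q)" by fastforce
  obtain P' i where ins: "tab_ins x P = (P', i)" by fastforce
  show thesis using that[OF PQ ins] rsk_snoc[of u x] PQ ins by simp
qed

lemma is_rsk_pair_rsk: "distinct v \<Longrightarrow> is_rsk_pair (set v) (length v) (rsk v)"
proof (induction v rule: rev_induct)
  case Nil then show ?case by (simp add: is_rsk_pair_def rsk_def shape_def)
next
  case (snoc x u)
  then show ?case by (cases rule: rsk_snoc_cases[of u x]) (use is_rsk_pair_tab_ins in auto)
qed

lemma rsk_inv_rsk: "distinct v \<Longrightarrow> rsk_inv (length v) (rsk v) = v"
proof (induction v rule: rev_induct)
  case Nil then show ?case by simp
next
  case (snoc x u)
  then show ?case
    by (cases rule: rsk_snoc_cases[of u x]) (use rsk_inv_tab_ins is_rsk_pair_rsk[of u] in auto)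
qed

lemma is_rsk_pair_tab_del:
  assumes pair: "is_rsk_pair A (Suc m) (P, Q)" and i: "i = row_idx Q (Suc m)"
    and del: "tab_del i P = (P0, x)"
  shows "is_rsk_pair (A - {x}) m (P0, del_box i Q) \<and> x \<in> A
    \<and> tab_ins x P0 = (P, i) \<and> add_cell i (Suc m) (del_box i Q) = Q"
proof -
  let ?Q0 = "del_box i Q"
  have tP: "is_tableau P" and dP: "distinct (concat P)" and sP: "set (concat P) = A"
    and tQ: "is_tableau Q" and dQ: "distinct (concat Q)" and sQ: "set (concat Q) = {1..Suc m}"
    and shape: "shape P = shape Q"
    using pair unfolding is_rsk_pair_def by auto
  have "Suc m \<in> set (concat Q)" "\<forall>z\<in>set (concat Q). z \<le> Suc m" using sQ by auto
  then have corner: "is_corner i Q" and last: "last (Q ! i) = Suc m"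
    using max_entry_corner[OF tQ] i by auto
  have tQ0: "is_tableau ?Q0" using is_tableau_del_box[OF tQ corner] .
  have Q0: "add_cell i (Suc m) ?Q0 = Q" using add_cell_del_box[OF tQ corner] last by simp
  have iQ0: "i \<le> length ?Q0" using length_del_box corner unfolding is_corner_def by blast
  have mQ: "mset (concat Q) = mset (concat ?Q0) + {#Suc m#}"
    using mset_add_cell[OF iQ0, of "Suc m"] Q0 by simp
  have "is_corner i P" using corner shape is_rsk_pair_length[OF pair]
    unfolding is_corner_def shape_def by (metis nth_map)
  then have tP0: "is_tableau P0" and ins: "tab_ins x P0 = (P, i)"
    using tab_ins_tab_del[OF tP dP _ del] by blast+
  have mP: "mset (concat P) = mset (concat P0) + {#x#}" using mset_tab_ins[of x P0] ins by simp
  have dQ0: "distinct (concat ?Q0)" "Suc m \<notin> set (concat ?Q0)"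
    using mset_eq_add_distinct_iff[OF mQ] dQ by auto
  have "insert (Suc m) (set (concat ?Q0)) = insert (Suc m) {1..m}"
    using mset_eq_add_set[OF mQ] sQ atLeastAtMostSuc_conv by auto
  then have sQ0: "set (concat ?Q0) = {1..m}" using dQ0(2) by (simp add: insert_ident)
  have dP0: "distinct (concat P0)" "x \<notin> set (concat P0)"
    using mset_eq_add_distinct_iff[OF mP] dP by auto
  have sP0: "set (concat P0) = A - {x}" "x \<in> A" using mset_eq_add_set[OF mP] sP dP0(2) by auto
  have "shape P = add_box i (shape P0)" "i \<le> length P0" using shape_tab_ins[OF ins] by auto
  moreover have "shape Q = add_box i (shape ?Q0)" using Q0 shape_add_cell by metis
  ultimately have "shape P0 = shape ?Q0"
    using add_box_inj[of i "shape P0" "shape ?Q0"] iQ0 shape is_shape_shape[OF tP0] is_shape_shape[OF tQ0]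
    unfolding is_shape_def by (simp add: shape_def)
  then show ?thesis using tP0 dP0 sP0 tQ0 dQ0 sQ0 ins Q0 unfolding is_rsk_pair_def by simp
qed

lemma rsk_rsk_inv:
  "is_rsk_pair A m PQ \<Longrightarrow>
    distinct (rsk_inv m PQ) \<and> set (rsk_inv m PQ) = A \<and> rsk (rsk_inv m PQ) = PQ"
proof (induction m arbitrary: A PQ)
  case 0
  then have "snd PQ = []" unfolding is_rsk_pair_def by (cases "snd PQ") auto
  then have "PQ = ([], [])" using 0 unfolding is_rsk_pair_def shape_def by (cases PQ) auto
  then show ?case using 0 unfolding is_rsk_pair_def by (simp add: rsk_def)
next
  case (Suc m)
  obtain P Q where PQ: "PQ = (P, Q)" by fastforce
  define i where "i = row_idx Q (Suc m)"
  obtain P0 x where del: "tab_del i P = (P0, x)" by fastforce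
  have step: "is_rsk_pair (A - {x}) m (P0, del_box i Q)" "x \<in> A"
    "tab_ins x P0 = (P, i)" "add_cell i (Suc m) (del_box i Q) = Q"
    using is_rsk_pair_tab_del[OF _ i_def del] Suc.prems PQ by auto
  let ?u = "rsk_inv m (P0, del_box i Q)"
  have u: "distinct ?u" "set ?u = A - {x}" "rsk ?u = (P0, del_box i Q)"
    using Suc.IH[OF step(1)] by auto
  have "rsk_inv (Suc m) PQ = ?u @ [x]" using PQ i_def del by simp
  moreover have "rsk (?u @ [x]) = (P, Q)"
    using rsk_snoc[of ?u x] u(3) step(3,4) length_rsk_inv[of m] by simp
  ultimately show ?case using u step(2) PQ by auto
qed

section \<open>Descents of the insertion tableau\<close>

definition pos :: "nat list \<Rightarrow> nat \<Rightarrow> nat" where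
  "pos v z = (LEAST p. p < length v \<and> v ! p = z)"

lemma pos_nth: "distinct v \<Longrightarrow> p < length v \<Longrightarrow> pos v (v ! p) = p"
  unfolding pos_def by (rule Least_equality) (auto simp: nth_eq_iff_index_eq)

lemma pos_in: "k \<in> set v \<Longrightarrow> pos v k < length v \<and> v ! pos v k = k"
  unfolding pos_def by (metis (mono_tags, lifting) LeastI in_set_conv_nth)

lemma pos_snoc: "distinct (u @ [x]) \<Longrightarrow> z \<in> set u \<Longrightarrow> pos (u @ [x]) z = pos u z \<and> pos u z < length u"
  by (metis distinct_append in_set_conv_nth length_append_singleton less_SucI nth_append pos_nth)

lemma pos_last: "distinct (u @ [x]) \<Longrightarrow> pos (u @ [x]) x = length u"
  using pos_nth[of "u @ [x]" "length u"] by simp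

lemma row_idx_tab_ins_less:
  assumes "is_tableau P" "Suc a \<in> set (concat P)" "a \<notin> set (concat P)"
  shows "row_idx (fst (tab_ins a P)) a < row_idx (fst (tab_ins a P)) (Suc a)"
proof (cases P)
  case Nil then show ?thesis using assms by simp
next
  case (Cons r rs)
  have sr: "sorted_wrt (<) r" using assms Cons by simp
  show ?thesis
  proof (cases rule: tab_ins_Cons_cases[of a r rs])
    case append
    then show ?thesis using Cons by auto
  next
    case (bump A y B)
    have "Suc a \<notin> set B"
    proof
      assume "Suc a \<in> set B"
      then have "y < Suc a" using sr bump(1) by (auto simp: sorted_wrt_append)
      then show False using bump(2) by simp
    qed
    then have "Suc a \<notin> set (A @ a # B)" using bump(3) by auto
    then show ?thesis using bump(4) Cons by simp
  qed
qed

lemma tab_ins_preserves_row_idx_le: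
  assumes "is_tableau P" "distinct (concat P)" "x \<notin> set (concat P)"
    "a \<in> set (concat P)" "Suc a \<in> set (concat P)" "x \<noteq> a" "x \<noteq> Suc a"
    "row_idx P (Suc a) \<le> row_idx P a"
  shows "row_idx (fst (tab_ins x P)) (Suc a) \<le> row_idx (fst (tab_ins x P)) a"
  using assms
proof (induction x P rule: tab_ins.induct)
  case (1 x) then show ?case by simp
next
  case (2 x r rs)
  have sr: "sorted_wrt (<) r" and dr: "distinct r" using 2(2) by (auto simp: strict_sorted_iff)
  show ?case
  proof (cases rule: tab_ins_Cons_cases[of x r rs])
    case append
    then show ?thesis using 2(7,8,9) by (simp split: if_splits)
  next
    case (bump A y B)
    have mem: "z \<in> set (A @ x # B) \<longleftrightarrow> z \<in> set r \<and> z \<noteq> y" if "z \<noteq> x" for z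
      using dr bump(1) that by auto
    show ?thesis
    proof (cases "Suc a \<in> set r")
      case True
      show ?thesis
      proof (cases "y = Suc a")
        case True
        have "a \<notin> set r"
        proof
          assume "a \<in> set r"
          moreover have "x < a" "a \<notin> set A" using bump(2,3) True 2(7) by auto
          ultimately have "a \<in> set B" using bump(1) True by auto
          then show False using sr bump(1) True by (auto simp: sorted_wrt_append)
        qed
        then show ?thesis
          using mem 2(7,8) True row_idx_tab_ins_self[of y rs] bump(4) by auto
      next
        case False
        then show ?thesis using mem 2(8) \<open>Suc a \<in> set r\<close> bump(4) by auto
      qed
    next
      case False
      then have ar: "a \<notin> set r" using 2(9) by (auto split: if_splits)
      have row: "row_ins x r = (A @ x # B, Some y)" using bump row_ins_bump by simp
      have "row_idx rs (Suc a) \<le> row_idx rs a" "a \<in> set (concat rs)" "Suc a \<in> set (concat rs)"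
        "y \<notin> set (concat rs)" "y \<noteq> a" "y \<noteq> Suc a"
        using 2(3,5,6,9) bump(1) ar False by auto
      then have "row_idx (fst (tab_ins y rs)) (Suc a) \<le> row_idx (fst (tab_ins y rs)) a"
        using 2(1)[OF row[symmetric] refl] 2(2,3) by simp
      then show ?thesis using mem 2(7,8) ar False bump(4) by auto
    qed
  qed
qed

lemma tab_ins_preserves_row_idx_less:
  assumes "is_tableau P" "distinct (concat P)" "x \<notin> set (concat P)"
    "a \<in> set (concat P)" "Suc a \<in> set (concat P)" "x \<noteq> a" "x \<noteq> Suc a"
    "row_idx P a < row_idx P (Suc a)"
  shows "row_idx (fst (tab_ins x P)) a < row_idx (fst (tab_ins x P)) (Suc a)"
  using assms
proof (induction x P rule: tab_ins.induct)
  case (1 x) then show ?case by simp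
next
  case (2 x r rs)
  have dr: "distinct r" using 2(2) by (auto simp: strict_sorted_iff)
  show ?case
  proof (cases rule: tab_ins_Cons_cases[of x r rs])
    case append
    then show ?thesis using 2(7,8,9) by (simp split: if_splits)
  next
    case (bump A y B)
    have mem: "z \<in> set (A @ x # B) \<longleftrightarrow> z \<in> set r \<and> z \<noteq> y" if "z \<noteq> x" for z
      using dr bump(1) that by auto
    show ?thesis
    proof (cases "a \<in> set r")
      case True
      then have br: "Suc a \<notin> set r" using 2(9) by auto
      show ?thesis
      proof (cases "y = a")
        case True
        have "a \<notin> set (concat rs)" "Suc a \<in> set (concat rs)"
          using 2(3,6) \<open>a \<in> set r\<close> br by auto
        then show ?thesis using row_idx_tab_ins_less[of rs a] 2(2) mem 2(7,8) br True bump(4)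
          by auto
      next
        case False
        then show ?thesis using mem 2(7,8) True br bump(4) by auto
      qed
    next
      case False
      then have br: "Suc a \<notin> set r" using 2(9) by (auto split: if_splits)
      have row: "row_ins x r = (A @ x # B, Some y)" using bump row_ins_bump by simp
      have "row_idx rs a < row_idx rs (Suc a)" "a \<in> set (concat rs)" "Suc a \<in> set (concat rs)"
        "y \<notin> set (concat rs)" "y \<noteq> a" "y \<noteq> Suc a"
        using 2(3,5,6,9) bump(1) br False by auto
      then have "row_idx (fst (tab_ins y rs)) a < row_idx (fst (tab_ins y rs)) (Suc a)"
        using 2(1)[OF row[symmetric] refl] 2(2,3) by simp
      then show ?thesis using mem 2(7,8) br False bump(4) by auto
    qed
  qed
qed

text \<open>Since \<open>a\<close> and \<open>a + 1\<close> are adjacent values, their relative row order is fixed when the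
  later of the two is inserted and is never changed afterwards.\<close>
lemma rsk_row_idx_less_iff:
  "distinct v \<Longrightarrow> a \<in> set v \<Longrightarrow> Suc a \<in> set v \<Longrightarrow>
    row_idx (fst (rsk v)) a < row_idx (fst (rsk v)) (Suc a) \<longleftrightarrow> pos v (Suc a) < pos v a"
proof (induction v rule: rev_induct)
  case Nil then show ?case by simp
next
  case (snoc x u)
  obtain P Q where PQ: "rsk u = (P, Q)" by fastforce
  have P': "fst (rsk (u @ [x])) = fst (tab_ins x P)" using rsk_snoc[of u x] PQ
    by (simp split: prod.splits)
  have du: "distinct u" and xu: "x \<notin> set u" using snoc.prems by auto
  then have tP: "is_tableau P" "distinct (concat P)" "set (concat P) = set u"
    using is_rsk_pair_rsk[OF du] PQ unfolding is_rsk_pair_def by auto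
  consider "x = a" | "x = Suc a" | "x \<noteq> a" "x \<noteq> Suc a" by blast
  then show ?case
  proof cases
    case 1
    then have "Suc a \<in> set u" using snoc.prems by auto
    then have "Suc a \<in> set (concat P)" "a \<notin> set (concat P)" using tP(3) xu 1 by auto
    then show ?thesis using row_idx_tab_ins_less[OF tP(1)] \<open>Suc a \<in> set u\<close> 1 P'
      pos_snoc[OF snoc.prems(1)] pos_last[OF snoc.prems(1)] by simp
  next
    case 2
    then have "a \<in> set u" using snoc.prems by auto
    then show ?thesis using row_idx_tab_ins_self[of x P] 2 P'
      pos_snoc[OF snoc.prems(1) \<open>a \<in> set u\<close>] pos_last[OF snoc.prems(1)] by simp
  next
    case 3
    then have au: "a \<in> set u" "Suc a \<in> set u" using snoc.prems by auto
    have "x \<notin> set (concat P)" "a \<in> set (concat P)" "Suc a \<in> set (concat P)"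
      using tP(3) xu au by auto
    then have "row_idx (fst (tab_ins x P)) a < row_idx (fst (tab_ins x P)) (Suc a)
        \<longleftrightarrow> row_idx P a < row_idx P (Suc a)"
      using tab_ins_preserves_row_idx_le[OF tP(1,2)] tab_ins_preserves_row_idx_less[OF tP(1,2)] 3
      by (meson not_le)
    then show ?thesis using snoc.IH[OF du au] PQ P'
      pos_snoc[OF snoc.prems(1) au(1)] pos_snoc[OF snoc.prems(1) au(2)] by simp
  qed
qed

lemma row_of_eq_row_idx: "z \<in> set (concat T) \<Longrightarrow> row_of T z = row_idx T z"
proof (induction T)
  case Nil then show ?case by simp
next
  case (Cons r rs)
  show ?case
  proof (cases "z \<in> set r")
    case True
    then show ?thesis unfolding row_of_def by (intro Least_equality) auto
  next
    case False
    then have zr: "z \<in> set (concat rs)" using Cons.prems by simp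
    then obtain s where "s \<in> set rs" "z \<in> set s" by auto
    then obtain i where i: "i < length rs" "z \<in> set (rs ! i)" by (metis in_set_conv_nth)
    have "row_of (r # rs) z = Suc (LEAST m. Suc m < length (r # rs) \<and> z \<in> set ((r # rs) ! Suc m))"
      unfolding row_of_def by (rule Least_Suc[of _ "Suc i"]) (use i False in auto)
    also have "\<dots> = Suc (row_of rs z)" unfolding row_of_def by simp
    finally show ?thesis using Cons.IH[OF zr] False by simp
  qed
qed

lemma length_perm_inv: "length (perm_inv v) = length v"
  unfolding perm_inv_def by (simp del: upt_Suc)

lemma perm_inv_nth: "j < length v \<Longrightarrow> perm_inv v ! j = Suc (pos v (Suc j))"
  unfolding perm_inv_def pos_def by (simp add: nth_upt del: upt_Suc)

lemma perm_des_perm_inv: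
  "perm_des (perm_inv v) = {i. 1 \<le> i \<and> i < length v \<and> pos v (Suc i) < pos v i}"
proof -
  have "i - 1 < length v \<and> Suc (i - 1) = i" if "1 \<le> i" "i < length v" for i
    using that by auto
  then show ?thesis unfolding perm_des_def length_perm_inv by (auto simp: perm_inv_nth)
qed

lemma perm_des_perm_inv_eq_tab_des: "is_perm n v \<Longrightarrow> perm_des (perm_inv v) = tab_des (fst (rsk v))"
proof -
  assume "is_perm n v"
  then have dv: "distinct v" "length v = n" "set v = {1..n}" unfolding is_perm_def by auto
  obtain P Q where PQ: "rsk v = (P, Q)" by fastforce
  then have dP: "distinct (concat P)" and sP: "set (concat P) = {1..n}"
    using is_rsk_pair_rsk[OF dv(1)] dv unfolding is_rsk_pair_def by auto
  have "sum_list (shape P) = length (concat P)" by (simp add: shape_def length_concat)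
  also have "\<dots> = n" using distinct_card[OF dP] sP by simp
  finally have sl: "sum_list (shape P) = n" .
  have "row_of P i < row_of P (Suc i) \<longleftrightarrow> pos v (Suc i) < pos v i" if "1 \<le> i" "i < n" for i
  proof -
    have "i \<in> set (concat P)" "Suc i \<in> set (concat P)" using that sP by auto
    then show ?thesis using row_of_eq_row_idx rsk_row_idx_less_iff[OF dv(1), of i] that dv PQ
      by simp
  qed
  then show ?thesis unfolding perm_des_perm_inv tab_des_def sl PQ fst_conv dv(2) by auto
qed

section \<open>Standard Young tableaux\<close>

definition columns_increasing :: "tableau \<Rightarrow> bool" where
  "columns_increasing T \<longleftrightarrow>
     (\<forall>i j. Suc i < length T \<and> j < length (T ! Suc i) \<longrightarrow> T ! i ! j < T ! Suc i ! j)"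

lemma columns_increasing_Cons: "columns_increasing (r # rs) \<longleftrightarrow>
    (\<forall>s ss. rs = s # ss \<longrightarrow> (\<forall>j<length s. r ! j < s ! j)) \<and> columns_increasing rs"
proof
  assume c: "columns_increasing (r # rs)"
  have "\<forall>j<length s. r ! j < s ! j" if "rs = s # ss" for s ss
    using c[unfolded columns_increasing_def, rule_format, of 0] that by simp
  moreover have "columns_increasing rs" unfolding columns_increasing_def
    using c[unfolded columns_increasing_def, rule_format, of "Suc i" for i] by simp
  ultimately show "(\<forall>s ss. rs = s # ss \<longrightarrow> (\<forall>j<length s. r ! j < s ! j)) \<and> columns_increasing rs"
    by blast
next
  assume c: "(\<forall>s ss. rs = s # ss \<longrightarrow> (\<forall>j<length s. r ! j < s ! j)) \<and> columns_increasing rs"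
  show "columns_increasing (r # rs)" unfolding columns_increasing_def
  proof (intro allI impI)
    fix i j assume "Suc i < length (r # rs) \<and> j < length ((r # rs) ! Suc i)"
    then show "(r # rs) ! i ! j < (r # rs) ! Suc i ! j"
      using c unfolding columns_increasing_def by (cases i; cases rs) auto
  qed
qed

lemma is_tableau_iff:
  "is_shape (shape T) \<Longrightarrow> is_tableau T \<longleftrightarrow> (\<forall>r\<in>set T. sorted_wrt (<) r) \<and> columns_increasing T"
proof (induction T)
  case Nil then show ?case by (simp add: columns_increasing_def)
next
  case (Cons r rs)
  have "is_shape (shape rs)" "r \<noteq> []" using Cons.prems by (auto simp: is_shape_def shape_def)
  moreover have "length s \<le> length r" if "rs = s # ss" for s ss
    using Cons.prems that by (simp add: is_shape_def shape_def)
  ultimately show ?case using Cons.IH unfolding columns_increasing_Cons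
    by (auto simp: fits_below_def split: list.splits)
qed

lemma is_SYT_iff_is_tableau:
  "is_partition n lam \<Longrightarrow> shape T = lam \<Longrightarrow>
    is_SYT lam T \<longleftrightarrow> is_tableau T \<and> distinct (concat T) \<and> set (concat T) = {1..n}"
  using is_tableau_iff[of T]
  unfolding is_SYT_def is_partition_def is_shape_def columns_increasing_def by auto

lemma bij_betw_rsk: "bij_betw rsk {v. is_perm n v} {PQ. is_rsk_pair {1..n} n PQ}"
proof (rule bij_betw_byWitness[where f' = "rsk_inv n"])
  show "\<forall>v\<in>{v. is_perm n v}. rsk_inv n (rsk v) = v"
    using rsk_inv_rsk unfolding is_perm_def by auto
  show "\<forall>PQ\<in>{PQ. is_rsk_pair {1..n} n PQ}. rsk (rsk_inv n PQ) = PQ"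
    using rsk_rsk_inv by blast
  show "rsk ` {v. is_perm n v} \<subseteq> {PQ. is_rsk_pair {1..n} n PQ}"
    using is_rsk_pair_rsk unfolding is_perm_def by fastforce
  show "rsk_inv n ` {PQ. is_rsk_pair {1..n} n PQ} \<subseteq> {v. is_perm n v}"
    using rsk_rsk_inv length_rsk_inv unfolding is_perm_def by fastforce
qed

lemma is_rsk_pair_iff_is_SYT:
  assumes "is_partition n lam"
  shows "is_rsk_pair {1..n} n (P, Q) \<and> shape Q = lam \<longleftrightarrow> is_SYT lam P \<and> is_SYT lam Q"
proof -
  have "is_rsk_pair {1..n} n (P, Q) \<longleftrightarrow> is_SYT lam P \<and> is_SYT lam Q"
    if "shape P = lam" "shape Q = lam"
    using is_SYT_iff_is_tableau[OF assms that(1)] is_SYT_iff_is_tableau[OF assms that(2)] that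
    unfolding is_rsk_pair_def by simp
  moreover have "shape P = lam" if "is_rsk_pair {1..n} n (P, Q)" "shape Q = lam"
    using that unfolding is_rsk_pair_def by simp
  ultimately show ?thesis unfolding is_SYT_def by blast
qed

lemma card_rsk_fibre:
  assumes "is_partition n lam"
  shows "card {v. is_perm n v \<and> tab_des (fst (rsk v)) = D \<and> shape (snd (rsk v)) = lam}
    = beta lam D * flam lam"
proof -
  have "bij_betw rsk {v \<in> {v. is_perm n v}. tab_des (fst (rsk v)) = D \<and> shape (snd (rsk v)) = lam}
      {PQ \<in> {PQ. is_rsk_pair {1..n} n PQ}. tab_des (fst PQ) = D \<and> shape (snd PQ) = lam}"
    by (rule bij_betw_Collect[OF bij_betw_rsk]) simp
  also have "{PQ \<in> {PQ. is_rsk_pair {1..n} n PQ}. tab_des (fst PQ) = D \<and> shape (snd PQ) = lam}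
      = {P. is_SYT lam P \<and> tab_des P = D} \<times> {Q. is_SYT lam Q}"
    using is_rsk_pair_iff_is_SYT[OF assms] by fastforce
  finally show ?thesis
    unfolding beta_def flam_def by (simp add: bij_betw_same_card card_cartesian_product)
qed

section \<open>Standardization of words\<close>

definition word_less :: "nat list \<Rightarrow> nat \<Rightarrow> nat \<Rightarrow> bool" where
  "word_less J p p' \<longleftrightarrow> J ! p < J ! p' \<or> (J ! p = J ! p' \<and> p < p')"

definition is_standardization :: "nat list \<Rightarrow> nat list \<Rightarrow> bool" where
  "is_standardization v J \<longleftrightarrow> (\<forall>p<length v. \<forall>p'<length v. v ! p < v ! p' \<longleftrightarrow> word_less J p p')"

lemma word_less_trans: "word_less J p p' \<Longrightarrow> word_less J p' p'' \<Longrightarrow> word_less J p p''"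
  unfolding word_less_def by auto

lemma word_perm_nth: "p < length J \<Longrightarrow> word_perm J ! p = Suc (card {t. t < length J \<and> word_less J t p})"
  unfolding word_perm_def word_less_def by simp

lemma length_word_perm: "length (word_perm J) = length J"
  unfolding word_perm_def by simp

lemma word_perm_less_iff:
  assumes "p < length J" "p' < length J"
  shows "word_perm J ! p < word_perm J ! p' \<longleftrightarrow> word_less J p p'"
proof -
  let ?C = "\<lambda>p. {t. t < length J \<and> word_less J t p}"
  have less: "card (?C a) < card (?C b)" if "word_less J a b" "a < length J" for a b
  proof (rule psubset_card_mono)
    have "?C a \<subseteq> ?C b" using that(1) word_less_trans by blast
    moreover have "a \<in> ?C b" "a \<notin> ?C a" using that unfolding word_less_def by auto
    ultimately show "?C a \<subset> ?C b" by blast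
  qed simp
  have "word_less J p p' \<or> word_less J p' p \<or> p = p'" unfolding word_less_def by auto
  then show ?thesis using less[of p p'] less[of p' p] assms word_perm_nth by auto
qed

lemma word_perm_eqI:
  assumes v: "is_perm n v" and J: "length J = n" and std: "is_standardization v J"
  shows "word_perm J = v"
proof (rule nth_equalityI)
  have dv: "distinct v" "length v = n" "set v = {1..n}" using v unfolding is_perm_def by auto
  show "length (word_perm J) = length v" using dv J length_word_perm by simp
  fix p assume "p < length (word_perm J)"
  then have p: "p < n" using J length_word_perm by simp
  then have vp: "v ! p \<in> {1..n}" using dv nth_mem by blast
  have "{t. t < n \<and> word_less J t p} = {t. t < n \<and> v ! t < v ! p}"
    using std dv p unfolding is_standardization_def by auto
  moreover have "bij_betw ((!) v) {t. t < n \<and> v ! t < v ! p} {1..<v ! p}"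
  proof (rule bij_betw_imageI)
    show "inj_on ((!) v) {t. t < n \<and> v ! t < v ! p}" using inj_on_nth[of v] dv by simp
    show "(!) v ` {t. t < n \<and> v ! t < v ! p} = {1..<v ! p}"
    proof
      show "(!) v ` {t. t < n \<and> v ! t < v ! p} \<subseteq> {1..<v ! p}"
        using dv nth_mem by fastforce
      show "{1..<v ! p} \<subseteq> (!) v ` {t. t < n \<and> v ! t < v ! p}"
      proof
        fix k assume k: "k \<in> {1..<v ! p}"
        then have "k \<in> set v" using vp dv by auto
        then obtain t where "t < n" "v ! t = k" using dv by (metis in_set_conv_nth)
        then show "k \<in> (!) v ` {t. t < n \<and> v ! t < v ! p}" using k by force
      qed
    qed
  qed
  ultimately have "card {t. t < n \<and> word_less J t p} = v ! p - 1"
    by (simp add: bij_betw_same_card)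
  then show "word_perm J ! p = v ! p" using word_perm_nth[of p J] p J vp by simp
qed

lemma word_perm_eq_iff:
  assumes "is_perm n v" "length J = n"
  shows "word_perm J = v \<longleftrightarrow> is_standardization v J"
  using word_perm_eqI[OF assms] word_perm_less_iff[of _ J] assms
  unfolding is_standardization_def is_perm_def by (auto simp: length_word_perm)

lemma chain_iff_Suc_chain:
  assumes trans: "\<And>x y z. R x y \<Longrightarrow> R y z \<Longrightarrow> R x z"
  shows "(\<forall>k k'. a \<le> k \<longrightarrow> k < k' \<longrightarrow> k' \<le> b \<longrightarrow> R k k') \<longleftrightarrow> (\<forall>k. a \<le> k \<longrightarrow> k < b \<longrightarrow> R k (Suc k))"
proof (intro iffI allI impI)
  fix k k' assume step: "\<forall>k. a \<le> k \<longrightarrow> k < b \<longrightarrow> R k (Suc k)" and "a \<le> k" "k < k'" "k' \<le> b"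
  from \<open>k < k'\<close> this(2-) show "R k k'"
  proof (induction k k' rule: less_Suc_induct)
    case (1 i) then show ?case using step by simp
  next
    case (2 i j k) then show ?case using trans by simp
  qed
qed auto

lemma is_standardization_iff_cards:
  assumes "is_perm n v" "length J = n"
  shows "is_standardization v J \<longleftrightarrow>
    (\<forall>k k'. 1 \<le> k \<longrightarrow> k < k' \<longrightarrow> k' \<le> n \<longrightarrow> word_less J (pos v k) (pos v k'))"
proof
  have dv: "distinct v" "length v = n" "set v = {1..n}" using assms(1) unfolding is_perm_def by auto
  have pos: "pos v k < n" "v ! pos v k = k" if "k \<in> {1..n}" for k using pos_in[of k v] dv that
    by auto
  {
    assume std: "is_standardization v J"
    show "\<forall>k k'. 1 \<le> k \<longrightarrow> k < k' \<longrightarrow> k' \<le> n \<longrightarrow> word_less J (pos v k) (pos v k')"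
    proof (intro allI impI)
      fix k k' assume "1 \<le> k" "k < k'" "k' \<le> n"
      then show "word_less J (pos v k) (pos v k')"
        using std[unfolded is_standardization_def, rule_format, of "pos v k" "pos v k'"]
          pos[of k] pos[of k'] dv(2) by simp
    qed
  next
    assume cards: "\<forall>k k'. 1 \<le> k \<longrightarrow> k < k' \<longrightarrow> k' \<le> n \<longrightarrow> word_less J (pos v k) (pos v k')"
    have less: "word_less J p p'" if "p < n" "p' < n" "v ! p < v ! p'" for p p'
      using cards[rule_format, of "v ! p" "v ! p'"] that pos_nth[OF dv(1)] dv nth_mem by fastforce
    show "is_standardization v J" unfolding is_standardization_def
    proof (intro allI impI)
      fix p p' assume p: "p < length v" "p' < length v"
      have "v ! p = v ! p' \<longrightarrow> p = p'" using p dv(1) nth_eq_iff_index_eq by blast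
      moreover have "\<not> (word_less J p p' \<and> word_less J p' p)" "\<not> word_less J p p"
        unfolding word_less_def by auto
      ultimately show "v ! p < v ! p' \<longleftrightarrow> word_less J p p'"
        using less[of p p'] less[of p' p] p dv(2) by (metis linorder_neqE_nat)
    qed
  }
qed

definition transport :: "nat list \<Rightarrow> nat list \<Rightarrow> nat list \<Rightarrow> nat list" where
  "transport v w J = map (\<lambda>p. J ! pos v (w ! p)) [0..<length w]"

definition word_weight :: "(nat \<Rightarrow> real) \<Rightarrow> nat \<Rightarrow> nat list \<Rightarrow> real" where
  "word_weight q n J = (\<Prod>p<n. q (J ! p))"

lemma transport_nth_pos:
  assumes "is_perm n w" "k \<in> {1..n}"
  shows "transport v w J ! pos w k = J ! pos v k"
  using assms pos_in[of k w] unfolding transport_def is_perm_def by auto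

lemma length_transport: "length (transport v w J) = length w"
  unfolding transport_def by simp

lemma is_standardization_transport:
  assumes v: "is_perm n v" and w: "is_perm n w" and J: "length J = n"
    and des: "perm_des (perm_inv v) = perm_des (perm_inv w)"
    and std: "is_standardization v J"
  shows "is_standardization w (transport v w J)"
proof -
  let ?J' = "transport v w J"
  have lv: "length v = n" "length w = n" using v w unfolding is_perm_def by auto
  have order: "pos u k < pos u (Suc k) \<longleftrightarrow> \<not> pos u (Suc k) < pos u k"
    if "is_perm n u" "1 \<le> k" "k < n" for u k
  proof -
    have "pos u k \<noteq> pos u (Suc k)"
      using pos_in[of k u] pos_in[of "Suc k" u] that unfolding is_perm_def by force
    then show ?thesis by linarith
  qed
  have step: "word_less J (pos v k) (pos v (Suc k)) \<longleftrightarrow> word_less ?J' (pos w k) (pos w (Suc k))"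
    if k: "1 \<le> k" "k < n" for k
  proof -
    have "k \<in> perm_des (perm_inv v) \<longleftrightarrow> k \<in> perm_des (perm_inv w)"
      using des by simp
    then have "pos v (Suc k) < pos v k \<longleftrightarrow> pos w (Suc k) < pos w k"
      unfolding perm_des_perm_inv using lv k by simp
    then have "pos v k < pos v (Suc k) \<longleftrightarrow> pos w k < pos w (Suc k)"
      using order[OF v k] order[OF w k] by simp
    moreover have "k \<in> {1..n}" "Suc k \<in> {1..n}" using k by auto
    ultimately show ?thesis unfolding word_less_def using transport_nth_pos[OF w] by simp
  qed
  have chain: "(\<forall>k k'. 1 \<le> k \<longrightarrow> k < k' \<longrightarrow> k' \<le> n \<longrightarrow> word_less I (pos u k) (pos u k'))
      \<longleftrightarrow> (\<forall>k. 1 \<le> k \<longrightarrow> k < n \<longrightarrow> word_less I (pos u k) (pos u (Suc k)))" for I u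
    by (rule chain_iff_Suc_chain) (rule word_less_trans)
  have "length ?J' = n" using lv by (simp add: length_transport)
  then show ?thesis
    using std step chain is_standardization_iff_cards[OF v J] is_standardization_iff_cards[OF w]
      by simp
qed

lemma transport_transport:
  assumes v: "is_perm n v" and w: "is_perm n w" and J: "length J = n"
  shows "transport w v (transport v w J) = J"
proof (rule nth_equalityI)
  have dv: "distinct v" "length v = n" "set v = {1..n}" using v unfolding is_perm_def by auto
  show "length (transport w v (transport v w J)) = length J" using dv J
    by (simp add: length_transport)
  fix p assume "p < length (transport w v (transport v w J))"
  then have p: "p < n" using dv by (simp add: length_transport)
  then have vp: "v ! p \<in> {1..n}" using dv nth_mem by blast
  have "transport w v (transport v w J) ! p = transport v w J ! pos w (v ! p)"
    unfolding transport_def using p dv by simp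
  also have "\<dots> = J ! pos v (v ! p)" using transport_nth_pos[OF w vp] .
  also have "\<dots> = J ! p" using pos_nth[of v p] dv p by simp
  finally show "transport w v (transport v w J) ! p = J ! p" .
qed

lemma word_weight_transport:
  assumes v: "is_perm n v" and w: "is_perm n w"
  shows "word_weight q n (transport v w J) = word_weight q n J"
proof -
  have dv: "distinct v" "length v = n" "set v = {1..n}" using v unfolding is_perm_def by auto
  have dw: "distinct w" "length w = n" "set w = {1..n}" using w unfolding is_perm_def by auto
  define s where "s p = pos v (w ! p)" for p
  have s: "s p < n" "v ! s p = w ! p" if "p < n" for p
  proof -
    have "w ! p \<in> set v" using dv(3) dw(2,3) that by (metis nth_mem)
    then show "s p < n" "v ! s p = w ! p" using pos_in dv(2) unfolding s_def by auto
  qed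
  have "inj_on s {..<n}"
  proof (rule inj_onI)
    fix a b assume ab: "a \<in> {..<n}" "b \<in> {..<n}" "s a = s b"
    then have "w ! a = w ! b" using s[of a] s[of b] by simp
    then show "a = b" using dw ab nth_eq_iff_index_eq by auto
  qed
  then have bij: "bij_betw s {..<n} {..<n}"
    using endo_inj_surj[of "{..<n}" s] s(1) by (auto simp: bij_betw_def)
  have "word_weight q n (transport v w J) = (\<Prod>p<n. q (J ! s p))"
    unfolding word_weight_def transport_def s_def using dw by simp
  also have "\<dots> = word_weight q n J"
    unfolding word_weight_def using prod.reindex_bij_betw[OF bij, of "\<lambda>t. q (J ! t)"]
      by simp
  finally show ?thesis .
qed

lemma shuffle_prob_eq_word_weight:
  "shuffle_prob q n S = infsum (word_weight q n) {J. length J = n \<and> word_perm J \<in> S}"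
  unfolding shuffle_prob_def word_weight_def ..

lemma shuffle_prob_eq_if_same_inverse_descents:
  assumes v: "is_perm n v" and w: "is_perm n w"
    and des: "perm_des (perm_inv v) = perm_des (perm_inv w)"
  shows "shuffle_prob q n {v} = shuffle_prob q n {w}"
proof -
  let ?Jv = "{J. length J = n \<and> is_standardization v J}"
    and ?Jw = "{J. length J = n \<and> is_standardization w J}"
  have lv: "length v = n" "length w = n" using v w unfolding is_perm_def by auto
  have bij: "bij_betw (transport v w) ?Jv ?Jw"
  proof (rule bij_betw_byWitness[where f' = "transport w v"])
    show "\<forall>J\<in>?Jv. transport w v (transport v w J) = J" using transport_transport[OF v w]
      by simp
    show "\<forall>J\<in>?Jw. transport v w (transport w v J) = J" using transport_transport[OF w v]
      by simp
    show "transport v w ` ?Jv \<subseteq> ?Jw"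
      using is_standardization_transport[OF v w _ des] lv by (auto simp: length_transport)
    show "transport w v ` ?Jw \<subseteq> ?Jv"
      using is_standardization_transport[OF w v _ des[symmetric]] lv
        by (auto simp: length_transport)
  qed
  have "infsum (word_weight q n) ?Jw = infsum (\<lambda>J. word_weight q n (transport v w J)) ?Jv"
    using infsum_reindex_bij_betw[OF bij, of "word_weight q n"] by simp
  also have "\<dots> = infsum (word_weight q n) ?Jv" by (simp add: word_weight_transport[OF v w])
  finally have "infsum (word_weight q n) ?Jw = infsum (word_weight q n) ?Jv" .
  moreover have "{J. length J = n \<and> word_perm J \<in> {u}} = {J. length J = n \<and> is_standardization u J}"
    if "is_perm n u" for u
    using word_perm_eq_iff[OF that] by auto
  ultimately show ?thesis unfolding shuffle_prob_eq_word_weight using v w by simp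
qed

section \<open>Finiteness and summability\<close>

lemma word_weight_nonneg: "\<forall>i. q i \<ge> 0 \<Longrightarrow> word_weight q n J \<ge> 0"
  unfolding word_weight_def by (simp add: prod_nonneg)

lemma word_weight_Cons: "word_weight q (Suc n) (a # J) = q a * word_weight q n J"
  unfolding word_weight_def by (subst prod.lessThan_Suc_shift) simp

lemma sum_word_weight_le_1:
  assumes q0: "\<forall>i. q i \<ge> 0" and q1: "\<And>A. finite A \<Longrightarrow> sum q A \<le> 1"
  shows "finite F \<Longrightarrow> F \<subseteq> {J. length J = n} \<Longrightarrow> sum (word_weight q n) F \<le> 1"
proof (induction n arbitrary: F)
  case 0
  then have "F = {} \<or> F = {[]}" by auto
  then show ?case by (auto simp: word_weight_def)
next
  case (Suc n)
  let ?f = "\<lambda>(a, J). a # J"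
  let ?A = "hd ` F" and ?G = "tl ` F"
  have sub: "F \<subseteq> ?f ` (?A \<times> ?G)"
  proof
    fix J assume J: "J \<in> F"
    then have "J = hd J # tl J" using Suc.prems by (cases J) auto
    then show "J \<in> ?f ` (?A \<times> ?G)" using J by force
  qed
  have fin: "finite (?A \<times> ?G)" using Suc.prems by simp
  have inj: "inj_on ?f (?A \<times> ?G)" by (rule inj_onI) auto
  have "sum (word_weight q (Suc n)) F \<le> sum (word_weight q (Suc n)) (?f ` (?A \<times> ?G))"
    by (rule sum_mono2) (use fin sub word_weight_nonneg[OF q0] in auto)
  also have "\<dots> = (\<Sum>(a, J)\<in>?A \<times> ?G. q a * word_weight q n J)"
    unfolding sum.reindex[OF inj] by (rule sum.cong) (auto simp: word_weight_Cons)
  also have "\<dots> = sum q ?A * sum (word_weight q n) ?G"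
    by (simp add: sum.cartesian_product[symmetric] sum_product)
  also have "\<dots> \<le> 1 * 1"
  proof (rule mult_mono)
    have "?G \<subseteq> {J. length J = n}" using Suc.prems(2) by auto
    then show "sum (word_weight q n) ?G \<le> 1" using Suc.IH Suc.prems(1) by simp
  qed (use q1 Suc.prems word_weight_nonneg[OF q0] in \<open>auto intro: sum_nonneg\<close>)
  finally show ?case by simp
qed

lemma word_weight_summable_on:
  assumes q0: "\<forall>i. q i \<ge> 0" and q1: "q sums 1"
  shows "word_weight q n summable_on {J. length J = n}"
proof (rule nonneg_bdd_above_summable_on)
  show "\<And>J. J \<in> {J. length J = n} \<Longrightarrow> 0 \<le> word_weight q n J"
    using word_weight_nonneg[OF q0] by simp
  have "sum q A \<le> 1" if "finite A" for A
    using sum_le_suminf[OF sums_summable[OF q1] that] q0 sums_unique[OF q1] by simp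
  then show "bdd_above (sum (word_weight q n) ` {F. F \<subseteq> {J. length J = n} \<and> finite F})"
    using sum_word_weight_le_1[OF q0] by (intro bdd_aboveI[of _ 1]) auto
qed

lemma shuffle_prob_eq_sum:
  assumes "\<forall>i. q i \<ge> 0" "q sums 1" "finite S"
  shows "shuffle_prob q n S = (\<Sum>v\<in>S. shuffle_prob q n {v})"
proof -
  let ?J = "\<lambda>v. {J. length J = n \<and> word_perm J \<in> {v}}"
  have "{J. length J = n \<and> word_perm J \<in> S} = (\<Union>v\<in>S. ?J v)" by auto
  then have "shuffle_prob q n S = infsum (word_weight q n) (\<Union>v\<in>S. ?J v)"
    unfolding shuffle_prob_eq_word_weight by simp
  also have "\<dots> = (\<Sum>v\<in>S. infsum (word_weight q n) (?J v))"
  proof (rule sum_infsum[symmetric, OF assms(3)])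
    show "word_weight q n summable_on ?J v" for v
      by (rule summable_on_subset_banach[OF word_weight_summable_on[OF assms(1,2)]]) auto
  qed auto
  finally show ?thesis unfolding shuffle_prob_eq_word_weight .
qed

lemma finite_perms: "finite {v. is_perm n v}"
proof (rule finite_subset)
  show "{v. is_perm n v} \<subseteq> {xs. set xs \<subseteq> {1..n} \<and> length xs = n}"
    unfolding is_perm_def by auto
qed (simp add: finite_lists_length_eq)

lemma finite_SYT: "finite {T. is_SYT lam T}"
proof (rule finite_subset)
  let ?N = "sum_list lam"
  let ?R = "{r. set r \<subseteq> {1..?N} \<and> length r \<le> ?N}"
  show "finite {T. set T \<subseteq> ?R \<and> length T = length lam}"
    by (intro finite_lists_length_eq finite_lists_length_le) simp
  show "{T. is_SYT lam T} \<subseteq> {T. set T \<subseteq> ?R \<and> length T = length lam}"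
  proof
    fix T assume "T \<in> {T. is_SYT lam T}"
    then have T: "is_SYT lam T" by simp
    have "r \<in> ?R" if r: "r \<in> set T" for r
    proof -
      have "length r \<le> sum_list (map length T)" using r by (simp add: member_le_sum_list)
      moreover have "set r \<subseteq> set (concat T)" using r by auto
      ultimately show ?thesis using T unfolding is_SYT_def shape_def by auto
    qed
    then show "T \<in> {T. set T \<subseteq> ?R \<and> length T = length lam}"
      using T unfolding is_SYT_def shape_def by auto
  qed
qed

lemma beta_le_flam: "beta lam D \<le> flam lam"
  unfolding beta_def flam_def by (rule card_mono[OF finite_SYT]) auto

theorem lemma3p3:
  fixes q :: "nat \<Rightarrow> real" and n :: nat and D :: "nat set"
    and lam :: "nat list" and w :: "nat list"
  assumes "\<forall>i. q i \<ge> 0" and "q sums 1"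
    and "D \<subseteq> {1..n-1}"
    and "is_partition n lam"
    and "beta lam D \<noteq> 0"
    and "is_perm n w"
    and "perm_des (perm_inv w) = D"
    and "shape (fst (rsk w)) = lam"
  shows "shuffle_prob q n {w} =
    shuffle_prob q n {v. is_perm n v \<and> tab_des (fst (rsk v)) = D \<and> shape (snd (rsk v)) = lam}
      / (real (beta lam D) * real (flam lam))"
proof -
  let ?S = "{v. is_perm n v \<and> tab_des (fst (rsk v)) = D \<and> shape (snd (rsk v)) = lam}"
  have "finite ?S" by (rule finite_subset[OF _ finite_perms]) auto
  then have "shuffle_prob q n ?S = (\<Sum>v\<in>?S. shuffle_prob q n {v})"
    by (rule shuffle_prob_eq_sum[OF assms(1,2)])
  also have "\<dots> = (\<Sum>v\<in>?S. shuffle_prob q n {w})"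
  proof (rule sum.cong)
    fix v assume "v \<in> ?S"
    then show "shuffle_prob q n {v} = shuffle_prob q n {w}"
      using shuffle_prob_eq_if_same_inverse_descents[OF _ assms(6)]
        perm_des_perm_inv_eq_tab_des assms(7) by simp
  qed simp
  also have "\<dots> = real (beta lam D * flam lam) * shuffle_prob q n {w}"
    using card_rsk_fibre[OF assms(4)] by simp
  finally show ?thesis using assms(5) beta_le_flam[of lam D] by simp
qed

end
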